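(* Let $\mathcal{A}$ be a collection of real valued stochastic processes on $[0,t]$ such that there exists a fixed subset $\Omega_{\mathcal{A}}\subset\Omega$ of full measure on which every element of $\mathcal{A}$ is continuous and has finite first variation. Fix a finite collection $\{W_1,\dots,W_N\}$ of independent Wiener processes and a sequence of partitions $0=s^n_1\le\cdots\le s^n_{m(n)}=t$ with mesh $\max_j(s^n_{j+1}-s^n_j)\to0$ as $n\to\infty$. Then there exist a fixed subset $\Omega'\subset\Omega_{\mathcal{A}}$ of full measure and a fixed subsequence $\{t^n_j\}_{j=0}^{k(n)}$ of the sequence of partitions such that whenever $$Z(s)=X(s)+\sum_{i=1}^NY_i(s)W_i(s)$$ with $X,Y_1,\dots,Y_N\in\mathcal{A}$, then on $\Omega'$ $$\sum_{j=1}^{k(n)}|Z(t^n_j)-Z(t^n_{j-1})|^2\longrightarrow\sum_{i=1}^N\int_0^tY_i^2(s)\,ds\quad\text{as }n\to\infty.$$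
   Context: No adaptedness of $X,Y_i$ to the Wiener processes is assumed. *)

theory Defs
  imports "HOL-Probability.Probability"
begin

definition bounded_variation_on :: "(real \<Rightarrow> real) \<Rightarrow> real \<Rightarrow> real \<Rightarrow> bool" where
  "bounded_variation_on f a b \<longleftrightarrow>
     (\<exists>B. \<forall>(p::nat \<Rightarrow> real) k. p 0 = a \<and> p k = b \<and> (\<forall>j<k. p j \<le> p (Suc j)) \<longrightarrow>
        (\<Sum>j<k. \<bar>f (p (Suc j)) - f (p j)\<bar>) \<le> B)"

definition wiener_process :: "'a measure \<Rightarrow> (real \<Rightarrow> 'a \<Rightarrow> real) \<Rightarrow> bool" where
  "wiener_process M W \<longleftrightarrow>
     prob_space M \<and>
     (\<forall>s\<ge>0. W s \<in> borel_measurable M) \<and>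
     (AE \<omega> in M. W 0 \<omega> = 0) \<and>
     (AE \<omega> in M. continuous_on {0..} (\<lambda>s. W s \<omega>)) \<and>
     (\<forall>s u. 0 \<le> s \<and> s < u \<longrightarrow>
        distributed M lborel (\<lambda>\<omega>. W u \<omega> - W s \<omega>) (\<lambda>x. ennreal (normal_density 0 (sqrt (u - s)) x))) \<and>
     (\<forall>(r::nat \<Rightarrow> real) k. 0 \<le> r 0 \<and> (\<forall>j<k. r j < r (Suc j)) \<longrightarrow>
        prob_space.indep_vars M (\<lambda>_. borel) (\<lambda>j \<omega>. W (r (Suc j)) \<omega> - W (r j) \<omega>) {..<k})"

definition indep_processes :: "'a measure \<Rightarrow> real \<Rightarrow> (nat \<Rightarrow> real \<Rightarrow> 'a \<Rightarrow> real) \<Rightarrow> nat set \<Rightarrow> bool" where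
  "indep_processes M t W I \<longleftrightarrow>
     prob_space.indep_vars M (\<lambda>_. PiM {0..t} (\<lambda>_. borel))
        (\<lambda>i \<omega>. restrict (\<lambda>s. W i s \<omega>) {0..t}) I"

end

theory Submission
  imports Defs
begin

text \<open>
  A discrete product rule splits each increment of \<open>Z = X + \<Sum>i. Y\<^sub>i W\<^sub>i\<close> into the
  Riemann-Ito term \<open>\<Sum>i. Y\<^sub>i(s\<^sub>j) \<Delta>W\<^sub>i\<close> and a remainder made of increments of the paths
  of bounded variation; by uniform continuity the remainder has vanishing sum of squares, and
  Cauchy-Schwarz disposes of the cross term. The sum of squares of the Riemann-Ito term is a
  Riemann-Stieltjes sum against the discrete covariations \<open>\<Sum>j. \<Delta>W\<^sub>i \<Delta>W\<^sub>k\<close>, so it tends to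
  \<open>\<Sum>i. \<integral> Y\<^sub>i\<^sup>2\<close> as soon as these covariations, accumulated up to each time \<open>r\<close> of a fixed
  countable dense set, tend to \<open>\<delta>\<^sub>i\<^sub>k r\<close>. That is a property of the Wiener paths alone:
  the mean square error of a discrete covariation is at most \<open>2 t\<close> times the mesh, so along a
  subsequence of partitions with summable mesh it converges almost surely, and the exceptional
  null set does not depend on \<open>X\<close> or \<open>Y\<close>.
\<close>

section \<open>Partitions and weighted Riemann sums\<close>

definition is_partition :: "(nat \<Rightarrow> real) \<Rightarrow> nat \<Rightarrow> real \<Rightarrow> real \<Rightarrow> bool" where
  "is_partition p L t h \<longleftrightarrow> 1 \<le> L \<and> p 1 = 0 \<and> p L = t \<and> 0 \<le> h \<and>
     (\<forall>j\<in>{1..<L}. p j \<le> p (Suc j) \<and> p (Suc j) - p j \<le> h)"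

definition incr :: "(nat \<Rightarrow> real) \<Rightarrow> (real \<Rightarrow> real) \<Rightarrow> nat \<Rightarrow> real" where
  "incr p f j = f (p (Suc j)) - f (p j)"

definition weight_upto :: "(nat \<Rightarrow> real) \<Rightarrow> nat \<Rightarrow> (nat \<Rightarrow> real) \<Rightarrow> real \<Rightarrow> real" where
  "weight_upto p L a r = (\<Sum>j\<in>{1..<L}. if p (Suc j) \<le> r then a j else 0)"

definition has_quadratic_variation :: "(nat \<Rightarrow> nat \<Rightarrow> real) \<Rightarrow> (nat \<Rightarrow> nat) \<Rightarrow> (real \<Rightarrow> real) \<Rightarrow> real \<Rightarrow> bool" where
  "has_quadratic_variation q L f v \<longleftrightarrow> (\<lambda>n. \<Sum>j\<in>{1..<L n}. (incr (q n) f j)\<^sup>2) \<longlonglongrightarrow> v"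

text \<open>Convergence of discrete covariations is only ever required at these times: they are dense
  enough for Riemann sums, and countable, so a single null set serves all of them.\<close>
definition grid_points :: "real \<Rightarrow> real set" where
  "grid_points t = (\<Union>K\<in>{0<..}. (\<lambda>k. t * real k / real K) ` {..K})"

lemma is_partition_mono:
  assumes "is_partition p L t h" "1 \<le> i" "i \<le> j" "j \<le> L"
  shows "p i \<le> p j"
  using assms(3,4)
proof (induction j rule: dec_induct)
  case (step k)
  then have "p k \<le> p (Suc k)" using assms(1,2) unfolding is_partition_def by auto
  with step show ?case by simp
qed simp

lemma is_partition_bounds:
  assumes "is_partition p L t h" "1 \<le> j" "j \<le> L"
  shows "0 \<le> p j" "p j \<le> t"
  using is_partition_mono[OF assms(1), of 1 j] is_partition_mono[OF assms(1), of j L] assms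
  unfolding is_partition_def by auto

lemma is_partition_cell:
  assumes "is_partition p L t h" "j \<in> {1..<L}"
  shows "0 \<le> p j" "p j \<le> p (Suc j)" "p (Suc j) \<le> t" "p (Suc j) - p j \<le> h"
  using assms is_partition_bounds[OF assms(1), of j] is_partition_bounds[OF assms(1), of "Suc j"]
  unfolding is_partition_def by auto

lemma is_partition_nonneg: "is_partition p L t h \<Longrightarrow> 0 \<le> t"
  using is_partition_bounds[of p L t h L] unfolding is_partition_def by auto

lemma is_partition_Max_mesh:
  assumes "1 \<le> L" "p 1 = 0" "p L = t" "\<forall>j\<in>{1..<L}. p j \<le> p (Suc j)"
  shows "is_partition p L t (Max (insert 0 ((\<lambda>j. p (Suc j) - p j) ` {1..<L})))"
  unfolding is_partition_def using assms by (auto intro!: Max_ge simp del: Max_insert)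

lemma weight_upto_end:
  assumes "is_partition p L t h"
  shows "weight_upto p L a t = (\<Sum>j\<in>{1..<L}. a j)"
  unfolding weight_upto_def using is_partition_cell(3)[OF assms] by (intro sum.cong) auto

lemma weight_upto_cell_lengths:
  assumes P: "is_partition p L t h" and r: "0 \<le> r" "r \<le> t"
  shows "\<bar>weight_upto p L (incr p (\<lambda>s. s)) r - r\<bar> \<le> h"
proof -
  have L: "1 \<le> L" and p1: "p 1 = 0" and pL: "p L = t" and h: "0 \<le> h"
    using P unfolding is_partition_def by auto
  have "(p l \<le> r \<longrightarrow> weight_upto p l (incr p (\<lambda>s. s)) r = p l) \<and>
        (\<not> p l \<le> r \<longrightarrow> r - h \<le> weight_upto p l (incr p (\<lambda>s. s)) r \<and> weight_upto p l (incr p (\<lambda>s. s)) r \<le> r)"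
    if "1 \<le> l" "l \<le> L" for l
    using that
  proof (induction l rule: dec_induct)
    case base
    then show ?case using p1 r by (simp add: weight_upto_def)
  next
    case (step l)
    have "p l \<le> p (Suc l)" "p (Suc l) - p l \<le> h"
      using P step.hyps step.prems unfolding is_partition_def by auto
    with step show ?case by (auto simp: weight_upto_def incr_def)
  qed
  from this[OF L order_refl] show ?thesis using pL r h by (cases "t \<le> r") auto
qed

lemma grid_points_subset: "0 \<le> t \<Longrightarrow> grid_points t \<subseteq> {0..t}"
  by (auto simp: grid_points_def field_simps intro!: mult_left_mono)

lemma countable_grid_points: "countable (grid_points t)"
  unfolding grid_points_def by (intro countable_UN countable_image) auto

lemma grid_point_in_grid_points: "0 < K \<Longrightarrow> k \<le> K \<Longrightarrow> t * real k / real K \<in> grid_points t"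
  unfolding grid_points_def by blast

lemma continuous_on_Icc_uniform_modulus:
  fixes g :: "real \<Rightarrow> real"
  assumes "continuous_on {a..b} g" "0 < \<epsilon>"
  obtains \<delta> where "0 < \<delta>" "\<And>x y. x \<in> {a..b} \<Longrightarrow> y \<in> {a..b} \<Longrightarrow> \<bar>x - y\<bar> < \<delta> \<Longrightarrow> \<bar>g x - g y\<bar> < \<epsilon>"
proof -
  have "uniformly_continuous_on {a..b} g" by (rule compact_uniformly_continuous[OF assms(1) compact_Icc])
  then obtain \<delta> where "0 < \<delta>" "\<And>x y. x \<in> {a..b} \<Longrightarrow> y \<in> {a..b} \<Longrightarrow> dist x y < \<delta> \<Longrightarrow> dist (g x) (g y) < \<epsilon>"
    unfolding uniformly_continuous_on_def using assms(2) by metis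
  then show thesis by (intro that[of \<delta>]) (auto simp: dist_real_def)
qed

lemma eventually_incr_small:
  assumes P: "\<forall>n. is_partition (q n) (L n) t (h n)" and h: "h \<longlonglongrightarrow> 0"
    and f: "continuous_on {0..t} f" and e: "0 < \<epsilon>"
  shows "eventually (\<lambda>n. \<forall>j\<in>{1..<L n}. \<bar>incr (q n) f j\<bar> < \<epsilon>) sequentially"
proof -
  obtain \<delta> where "0 < \<delta>" and uc: "\<And>x y. x \<in> {0..t} \<Longrightarrow> y \<in> {0..t} \<Longrightarrow> \<bar>x - y\<bar> < \<delta> \<Longrightarrow> \<bar>f x - f y\<bar> < \<epsilon>"
    using continuous_on_Icc_uniform_modulus[OF f e] by blast
  with h have "eventually (\<lambda>n. h n < \<delta>) sequentially"
    by (simp add: order_tendstoD(2))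
  then show ?thesis
  proof eventually_elim
    case (elim n)
    show ?case
    proof
      fix j assume "j \<in> {1..<L n}"
      note cell = is_partition_cell[OF P[rule_format, of n] this]
      then show "\<bar>incr (q n) f j\<bar> < \<epsilon>"
        using uc[of "q n (Suc j)" "q n j"] elim by (simp add: incr_def)
    qed
  qed
qed

lemma bounded_variation_on_partition:
  assumes "bounded_variation_on f 0 t"
  obtains V where "\<And>p L h. is_partition p L t h \<Longrightarrow> (\<Sum>j\<in>{1..<L}. \<bar>incr p f j\<bar>) \<le> V"
proof -
  obtain B where B: "\<And>(p::nat \<Rightarrow> real) k. p 0 = 0 \<Longrightarrow> p k = t \<Longrightarrow> (\<forall>j<k. p j \<le> p (Suc j)) \<Longrightarrow>
        (\<Sum>j<k. \<bar>f (p (Suc j)) - f (p j)\<bar>) \<le> B"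
    using assms unfolding bounded_variation_on_def by blast
  have "(\<Sum>j\<in>{1..<L}. \<bar>incr p f j\<bar>) \<le> B" if P: "is_partition p L t h" for p L h
  proof -
    have L: "L = Suc (L - 1)" using P unfolding is_partition_def by simp
    \<comment> \<open>The partitions in the definition of bounded variation are indexed from 0, ours from 1.\<close>
    have "(\<Sum>j\<in>{1..<L}. \<bar>incr p f j\<bar>) = (\<Sum>j<L - 1. \<bar>f (p (Suc (Suc j))) - f (p (Suc j))\<bar>)"
      using sum.shift_bounds_Suc_ivl[of "\<lambda>j. \<bar>incr p f j\<bar>" 0 "L - 1"] L
      by (simp add: incr_def lessThan_atLeast0)
    also have "\<dots> \<le> B"
      using P L by (intro B) (auto simp: is_partition_def)
    finally show ?thesis .
  qed
  then show thesis by (rule that)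
qed

lemma riemann_sum_uniform_grid:
  fixes g :: "real \<Rightarrow> real"
  assumes g: "continuous_on {0..t} g" and t: "0 \<le> t" and K: "0 < K"
    and uc: "\<forall>x\<in>{0..t}. \<forall>y\<in>{0..t}. \<bar>x - y\<bar> \<le> t / real K \<longrightarrow> \<bar>g x - g y\<bar> \<le> \<epsilon>"
  shows "\<bar>t / real K * (\<Sum>k\<in>{1..K}. g (t * real k / real K)) - integral {0..t} g\<bar> \<le> \<epsilon> * t"
proof -
  define r where "r k = t * real k / real K" for k
  have r_le: "r k \<le> t" if "k \<le> K" for k
    using that t K by (auto simp: r_def field_simps intro!: mult_left_mono)
  have "\<bar>t / real K * (\<Sum>k\<in>{1..l}. g (r k)) - integral {0..r l} g\<bar> \<le> \<epsilon> * r l" if "l \<le> K" for l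
    using that
  proof (induction l)
    case (Suc l)
    have cell: "0 \<le> r l" "r l \<le> r (Suc l)" "r (Suc l) \<le> t" "r (Suc l) - r l = t / real K"
      using r_le[OF Suc.prems] t K by (auto simp: r_def field_simps)
    have "integral {0..r (Suc l)} g = integral {0..r l} g + integral {r l..r (Suc l)} g"
      using cell by (intro Henstock_Kurzweil_Integration.integral_combine[symmetric]
          integrable_on_subinterval[OF integrable_continuous_interval[OF g]]) auto
    moreover have "\<bar>integral {r l..r (Suc l)} (\<lambda>x. g x - g (r (Suc l)))\<bar> \<le> \<epsilon> * (t / real K)"
    proof -
      have "continuous_on {r l..r (Suc l)} (\<lambda>x. g x - g (r (Suc l)))"
        using cell by (auto intro!: continuous_intros continuous_on_subset[OF g])
      moreover have "\<And>x. x \<in> {r l..r (Suc l)} \<Longrightarrow> norm (g x - g (r (Suc l))) \<le> \<epsilon>"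
        using uc cell by auto
      ultimately show ?thesis using integral_bound[OF cell(2)] cell(4) by fastforce
    qed
    moreover have "integral {r l..r (Suc l)} (\<lambda>x. g x - g (r (Suc l)))
        = integral {r l..r (Suc l)} g - t / real K * g (r (Suc l))"
      using cell by (subst integral_diff)
        (auto intro: integrable_on_subinterval[OF integrable_continuous_interval[OF g]])
    ultimately show ?case
      using Suc cell by (simp add: algebra_simps abs_le_iff)
  qed (simp add: r_def)
  from this[of K] show ?thesis using K by (simp add: r_def)
qed

lemma sum_weight_upto_regroup:
  fixes r :: "nat \<Rightarrow> real"
  assumes r: "incseq r" and last: "\<forall>j\<in>{1..<L}. p (Suc j) \<le> r K"
  defines "\<kappa> j \<equiv> LEAST k. p (Suc j) \<le> r k"
  shows "(\<Sum>k\<le>K. g k * (weight_upto p L a (r k) - (if k = 0 then 0 else weight_upto p L a (r (k - 1)))))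
       = (\<Sum>j\<in>{1..<L}. g (\<kappa> j) * a j)"
proof -
  have le_iff: "p (Suc j) \<le> r k \<longleftrightarrow> \<kappa> j \<le> k" if "j \<in> {1..<L}" for j k
    using LeastI[of "\<lambda>k. p (Suc j) \<le> r k" K] Least_le[of "\<lambda>k. p (Suc j) \<le> r k" k] last that
      monoD[OF r, of "\<kappa> j" k] by (auto simp: \<kappa>_def)
  have \<kappa>_le: "\<kappa> j \<le> K" if "j \<in> {1..<L}" for j
    using le_iff[OF that, of K] last that by blast
  have cell: "weight_upto p L a (r k) - (if k = 0 then 0 else weight_upto p L a (r (k - 1)))
      = (\<Sum>j\<in>{1..<L}. if \<kappa> j = k then a j else 0)" for k
    unfolding weight_upto_def using le_iff
    by (cases "k = 0") (auto simp: sum_subtractf[symmetric] intro!: sum.cong)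
  have "(\<Sum>k\<le>K. g k * (\<Sum>j\<in>{1..<L}. if \<kappa> j = k then a j else 0))
      = (\<Sum>j\<in>{1..<L}. if \<kappa> j \<le> K then g (\<kappa> j) * a j else 0)"
    unfolding sum_distrib_left by (subst sum.swap) (simp add: if_distrib sum.delta' cong: if_cong)
  also have "\<dots> = (\<Sum>j\<in>{1..<L}. g (\<kappa> j) * a j)"
    using \<kappa>_le by (intro sum.cong) auto
  finally show ?thesis unfolding cell .
qed

lemma weighted_sum_step_approx:
  assumes P: "is_partition p L t h" and K: "0 < K"
    and uc: "\<forall>x\<in>{0..t}. \<forall>y\<in>{0..t}. \<bar>x - y\<bar> \<le> h + t / real K \<longrightarrow> \<bar>g x - g y\<bar> \<le> \<epsilon>"
  defines "r k \<equiv> t * real k / real K"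
  shows "\<bar>(\<Sum>j\<in>{1..<L}. g (p j) * a j)
          - (\<Sum>k\<le>K. g (r k) * (weight_upto p L a (r k) - (if k = 0 then 0 else weight_upto p L a (r (k - 1)))))\<bar>
         \<le> \<epsilon> * (\<Sum>j\<in>{1..<L}. \<bar>a j\<bar>)"
proof -
  define \<kappa> where "\<kappa> j = (LEAST k. p (Suc j) \<le> r k)" for j
  have t: "0 \<le> t" using is_partition_nonneg[OF P] .
  have r: "incseq r"
    unfolding incseq_def r_def using t by (auto intro!: divide_right_mono mult_left_mono)
  have rK: "r K = t" using K by (simp add: r_def)
  have tK: "0 \<le> t / real K" using t by simp
  have last: "\<forall>j\<in>{1..<L}. p (Suc j) \<le> r K" by (simp add: rK is_partition_cell(3)[OF P])
  have close: "\<bar>g (p j) - g (r (\<kappa> j))\<bar> \<le> \<epsilon>" if j: "j \<in> {1..<L}" for j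
  proof -
    note cell = is_partition_cell[OF P j]
    have in_cell: "p (Suc j) \<le> r (\<kappa> j)"
      unfolding \<kappa>_def by (rule LeastI[of _ K]) (use last j in blast)
    have "\<kappa> j \<le> K" unfolding \<kappa>_def by (rule Least_le) (use last j in blast)
    then have "r (\<kappa> j) \<le> t" using monoD[OF r, of "\<kappa> j" K] rK by simp
    moreover have "0 \<le> r (\<kappa> j)" using t by (simp add: r_def)
    moreover have "r (\<kappa> j) - p (Suc j) \<le> t / real K"
    proof (cases "\<kappa> j = 0")
      case False
      then have "\<not> p (Suc j) \<le> r (\<kappa> j - 1)" unfolding \<kappa>_def by (intro not_less_Least) simp
      moreover have "r (\<kappa> j) = r (\<kappa> j - 1) + t / real K"
        using False by (simp add: r_def of_nat_diff diff_divide_distrib right_diff_distrib)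
      ultimately show ?thesis by simp
    next
      case True
      then have "r (\<kappa> j) = 0" by (simp add: r_def)
      then show ?thesis using cell tK by linarith
    qed
    ultimately show ?thesis using uc cell in_cell by auto
  qed
  have "(\<Sum>j\<in>{1..<L}. g (p j) * a j)
      - (\<Sum>k\<le>K. g (r k) * (weight_upto p L a (r k) - (if k = 0 then 0 else weight_upto p L a (r (k - 1)))))
      = (\<Sum>j\<in>{1..<L}. (g (p j) - g (r (\<kappa> j))) * a j)"
    unfolding sum_weight_upto_regroup[OF r last, of "\<lambda>k. g (r k)"] \<kappa>_def
    by (simp add: sum_subtractf left_diff_distrib)
  also have "\<bar>\<dots>\<bar> \<le> (\<Sum>j\<in>{1..<L}. \<epsilon> * \<bar>a j\<bar>)"
    using close by (auto simp: abs_mult intro!: order_trans[OF sum_abs] sum_mono mult_right_mono)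
  finally show ?thesis by (simp add: sum_distrib_left)
qed

lemma tendsto_grid_step_sum:
  assumes conv: "\<forall>r\<in>grid_points t. (\<lambda>n. F n r) \<longlonglongrightarrow> c * r" and K: "0 < K"
  defines "r k \<equiv> t * real k / real K"
  shows "(\<lambda>n. \<Sum>k\<le>K. g (r k) * (F n (r k) - (if k = 0 then 0 else F n (r (k - 1)))))
           \<longlonglongrightarrow> c * (t / real K * (\<Sum>k\<in>{1..K}. g (r k)))"
proof -
  have F: "(\<lambda>n. F n (r k)) \<longlonglongrightarrow> c * r k" if "k \<le> K" for k
    unfolding r_def using conv grid_point_in_grid_points[OF K that, of t] by blast
  have "(\<lambda>n. F n (r k) - (if k = 0 then 0 else F n (r (k - 1))))
      \<longlonglongrightarrow> c * r k - (if k = 0 then 0 else c * r (k - 1))" if "k \<le> K" for k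
    using F[OF that] F[of "k - 1"] that by (cases "k = 0") (auto intro!: tendsto_diff)
  then have "(\<lambda>n. \<Sum>k\<le>K. g (r k) * (F n (r k) - (if k = 0 then 0 else F n (r (k - 1)))))
      \<longlonglongrightarrow> (\<Sum>k\<le>K. g (r k) * (c * r k - (if k = 0 then 0 else c * r (k - 1))))"
    by (intro tendsto_sum tendsto_mult_left) auto
  also have "(\<Sum>k\<le>K. g (r k) * (c * r k - (if k = 0 then 0 else c * r (k - 1))))
      = (\<Sum>k\<in>insert 0 {1..K}. g (r k) * (c * r k - (if k = 0 then 0 else c * r (k - 1))))"
    by (intro sum.cong) auto
  also have "\<dots> = c * (t / real K * (\<Sum>k\<in>{1..K}. g (r k)))"
    by (simp add: r_def sum_distrib_left of_nat_diff diff_divide_distrib right_diff_distrib mult_ac)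
  finally show ?thesis .
qed

lemma tendsto_weighted_riemann_sum:
  assumes P: "\<forall>n. is_partition (q n) (L n) t (h n)" and h: "h \<longlonglongrightarrow> 0"
    and g: "continuous_on {0..t} g"
    and C: "\<forall>n. (\<Sum>j\<in>{1..<L n}. \<bar>a n j\<bar>) \<le> C"
    and conv: "\<forall>r\<in>grid_points t. (\<lambda>n. weight_upto (q n) (L n) (a n) r) \<longlonglongrightarrow> c * r"
  shows "(\<lambda>n. \<Sum>j\<in>{1..<L n}. g (q n j) * a n j) \<longlonglongrightarrow> c * integral {0..t} g"
proof (rule LIMSEQ_I)
  fix e :: real assume e: "0 < e"
  have t: "0 \<le> t" using is_partition_nonneg P by blast
  define D where "D = \<bar>C\<bar> + \<bar>c\<bar> * t + 1"
  have D: "0 < D" using t by (simp add: D_def add_nonneg_pos)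
  define \<epsilon> where "\<epsilon> = e / (2 * D)"
  have \<epsilon>: "0 < \<epsilon>" "\<epsilon> * \<bar>C\<bar> + \<bar>c\<bar> * (\<epsilon> * t) + \<epsilon> < e"
  proof -
    show "0 < \<epsilon>" using e D by (simp add: \<epsilon>_def)
    have "\<epsilon> * D = e / 2" using D by (simp add: \<epsilon>_def)
    then show "\<epsilon> * \<bar>C\<bar> + \<bar>c\<bar> * (\<epsilon> * t) + \<epsilon> < e" using e by (simp add: D_def algebra_simps)
  qed
  obtain \<delta> where \<delta>: "0 < \<delta>" and uc: "\<And>x y. x \<in> {0..t} \<Longrightarrow> y \<in> {0..t} \<Longrightarrow> \<bar>x - y\<bar> < \<delta> \<Longrightarrow> \<bar>g x - g y\<bar> < \<epsilon>"
    using continuous_on_Icc_uniform_modulus[OF g \<epsilon>(1)] by blast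
  then have uc_le: "\<forall>x\<in>{0..t}. \<forall>y\<in>{0..t}. \<bar>x - y\<bar> \<le> d \<longrightarrow> \<bar>g x - g y\<bar> \<le> \<epsilon>" if "d < \<delta>" for d
    using that by (auto intro: less_imp_le)
  obtain n :: nat where "2 * t / \<delta> < real n" using reals_Archimedean2 by blast
  then have "t / real (Suc n) < \<delta> / 2" using \<delta> t by (simp add: field_simps)
  then obtain K :: nat where K: "0 < K" "t / real K < \<delta> / 2" by blast
  define r where "r k = t * real k / real K" for k
  define T where "T n = (\<Sum>k\<le>K. g (r k) * (weight_upto (q n) (L n) (a n) (r k)
      - (if k = 0 then 0 else weight_upto (q n) (L n) (a n) (r (k - 1)))))" for n
  define R where "R = c * (t / real K * (\<Sum>k\<in>{1..K}. g (r k)))"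
  have "T \<longlonglongrightarrow> R" unfolding T_def R_def r_def by (rule tendsto_grid_step_sum[OF conv K(1)])
  then have "\<forall>\<^sub>F n in sequentially. dist (T n) R < \<epsilon>" using \<epsilon>(1) by (rule tendstoD)
  moreover have "\<forall>\<^sub>F n in sequentially. h n < \<delta> / 2"
    using order_tendstoD(2)[OF h, of "\<delta> / 2"] \<delta> by simp
  ultimately have "\<forall>\<^sub>F n in sequentially. norm ((\<Sum>j\<in>{1..<L n}. g (q n j) * a n j) - c * integral {0..t} g) < e"
  proof eventually_elim
    case (elim n)
    have "\<bar>(\<Sum>j\<in>{1..<L n}. g (q n j) * a n j) - T n\<bar> \<le> \<epsilon> * (\<Sum>j\<in>{1..<L n}. \<bar>a n j\<bar>)"
      unfolding T_def r_def
      by (rule weighted_sum_step_approx[OF P[rule_format] K(1) uc_le]) (use elim(2) K(2) in linarith)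
    also have "\<dots> \<le> \<epsilon> * \<bar>C\<bar>"
      using C[rule_format, of n] abs_ge_self[of C] \<epsilon>(1) by (intro mult_left_mono) linarith+
    finally have "\<bar>(\<Sum>j\<in>{1..<L n}. g (q n j) * a n j) - T n\<bar> \<le> \<epsilon> * \<bar>C\<bar>" .
    moreover have "\<bar>t / real K * (\<Sum>k\<in>{1..K}. g (r k)) - integral {0..t} g\<bar> \<le> \<epsilon> * t"
      unfolding r_def by (rule riemann_sum_uniform_grid[OF g t K(1) uc_le]) (use K(2) \<delta> in linarith)
    then have "\<bar>R - c * integral {0..t} g\<bar> \<le> \<bar>c\<bar> * (\<epsilon> * t)"
      unfolding R_def right_diff_distrib[symmetric] abs_mult by (rule mult_left_mono) simp
    ultimately show ?case using elim(1) \<epsilon>(2) by (simp add: dist_real_def)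
  qed
  then show "\<exists>n0. \<forall>n\<ge>n0. norm ((\<Sum>j\<in>{1..<L n}. g (q n j) * a n j) - c * integral {0..t} g) < e"
    by (simp add: eventually_sequentially)
qed

section \<open>Quadratic variation of sums of paths\<close>

lemma tendsto_sum_sq_zero_if_small:
  fixes b :: "nat \<Rightarrow> nat \<Rightarrow> real"
  assumes small: "\<And>\<epsilon>. 0 < \<epsilon> \<Longrightarrow> eventually (\<lambda>n. \<forall>j\<in>J n. \<bar>b n j\<bar> \<le> \<epsilon>) sequentially"
    and V: "\<forall>n. (\<Sum>j\<in>J n. \<bar>b n j\<bar>) \<le> V"
  shows "(\<lambda>n. \<Sum>j\<in>J n. (b n j)\<^sup>2) \<longlonglongrightarrow> 0"
proof (rule order_tendstoI)
  fix a :: real assume "0 < a"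
  have "0 < \<bar>V\<bar> + 1" by simp
  then have \<epsilon>: "0 < a / (\<bar>V\<bar> + 1)" "a / (\<bar>V\<bar> + 1) * \<bar>V\<bar> < a"
    using \<open>0 < a\<close> by (simp_all add: field_simps)
  have sq_le: "x\<^sup>2 \<le> \<epsilon> * \<bar>x\<bar>" if "\<bar>x\<bar> \<le> \<epsilon>" for x \<epsilon> :: real
    using mult_right_mono[OF that abs_ge_zero[of x]] by (simp add: power2_eq_square)
  show "eventually (\<lambda>n. (\<Sum>j\<in>J n. (b n j)\<^sup>2) < a) sequentially"
    using small[OF \<epsilon>(1)]
  proof eventually_elim
    case (elim n)
    have "(\<Sum>j\<in>J n. (b n j)\<^sup>2) \<le> (\<Sum>j\<in>J n. a / (\<bar>V\<bar> + 1) * \<bar>b n j\<bar>)"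
      using elim by (intro sum_mono sq_le) blast
    also have "\<dots> \<le> a / (\<bar>V\<bar> + 1) * \<bar>V\<bar>"
      unfolding sum_distrib_left[symmetric] using V[rule_format, of n] abs_ge_self[of V] \<epsilon>(1)
      by (intro mult_left_mono) linarith+
    finally show ?case using \<epsilon>(2) by linarith
  qed
next
  fix a :: real assume "a < 0"
  then show "eventually (\<lambda>n. a < (\<Sum>j\<in>J n. (b n j)\<^sup>2)) sequentially"
    by (intro always_eventually allI) (simp add: less_le_trans[OF \<open>a < 0\<close>] sum_nonneg)
qed

lemma tendsto_sum_sq_incr_zero:
  assumes P: "\<forall>n. is_partition (q n) (L n) t (h n)" and h: "h \<longlonglongrightarrow> 0"
    and f: "continuous_on {0..t} f" and bv: "bounded_variation_on f 0 t"
  shows "(\<lambda>n. \<Sum>j\<in>{1..<L n}. (incr (q n) f j)\<^sup>2) \<longlonglongrightarrow> 0"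
proof -
  obtain V where V: "\<And>p L h. is_partition p L t h \<Longrightarrow> (\<Sum>j\<in>{1..<L}. \<bar>incr p f j\<bar>) \<le> V"
    using bounded_variation_on_partition[OF bv] by blast
  show ?thesis
  proof (rule tendsto_sum_sq_zero_if_small)
    fix \<epsilon> :: real assume "0 < \<epsilon>"
    from eventually_incr_small[OF P h f this]
    show "eventually (\<lambda>n. \<forall>j\<in>{1..<L n}. \<bar>incr (q n) f j\<bar> \<le> \<epsilon>) sequentially"
      by (rule eventually_mono) (simp add: less_imp_le)
  qed (use V P in blast)
qed

lemma tendsto_sum_sq_mult_bounded:
  fixes b c :: "nat \<Rightarrow> nat \<Rightarrow> real"
  assumes c: "\<forall>n. \<forall>j\<in>J n. \<bar>c n j\<bar> \<le> B" and b: "(\<lambda>n. \<Sum>j\<in>J n. (b n j)\<^sup>2) \<longlonglongrightarrow> 0"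
  shows "(\<lambda>n. \<Sum>j\<in>J n. (c n j * b n j)\<^sup>2) \<longlonglongrightarrow> 0"
proof (rule Lim_null_comparison)
  show "\<forall>\<^sub>F n in sequentially. norm (\<Sum>j\<in>J n. (c n j * b n j)\<^sup>2) \<le> B\<^sup>2 * (\<Sum>j\<in>J n. (b n j)\<^sup>2)"
  proof (intro always_eventually allI)
    fix n
    have "\<bar>c n j\<bar> \<le> \<bar>B\<bar>" if "j \<in> J n" for j
      using c that by force
    then have "(c n j)\<^sup>2 \<le> B\<^sup>2" if "j \<in> J n" for j
      using that by (simp add: abs_le_square_iff)
    then have "(\<Sum>j\<in>J n. (c n j * b n j)\<^sup>2) \<le> B\<^sup>2 * (\<Sum>j\<in>J n. (b n j)\<^sup>2)"
      by (auto simp: sum_distrib_left power_mult_distrib intro!: sum_mono mult_right_mono)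
    then show "norm (\<Sum>j\<in>J n. (c n j * b n j)\<^sup>2) \<le> B\<^sup>2 * (\<Sum>j\<in>J n. (b n j)\<^sup>2)"
      by (simp add: sum_nonneg)
  qed
  show "(\<lambda>n. B\<^sup>2 * (\<Sum>j\<in>J n. (b n j)\<^sup>2)) \<longlonglongrightarrow> 0"
    using tendsto_mult_left[OF b, of "B\<^sup>2"] by simp
qed

lemma tendsto_sum_sq_add:
  fixes A B :: "nat \<Rightarrow> nat \<Rightarrow> real"
  assumes A: "(\<lambda>n. \<Sum>j\<in>J n. (A n j)\<^sup>2) \<longlonglongrightarrow> l" and B: "(\<lambda>n. \<Sum>j\<in>J n. (B n j)\<^sup>2) \<longlonglongrightarrow> 0"
  shows "(\<lambda>n. \<Sum>j\<in>J n. (A n j + B n j)\<^sup>2) \<longlonglongrightarrow> l"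
proof -
  have cross: "(\<lambda>n. \<Sum>j\<in>J n. A n j * B n j) \<longlonglongrightarrow> 0"
  proof (rule Lim_null_comparison)
    show "\<forall>\<^sub>F n in sequentially. norm (\<Sum>j\<in>J n. A n j * B n j)
        \<le> sqrt ((\<Sum>j\<in>J n. (A n j)\<^sup>2) * (\<Sum>j\<in>J n. (B n j)\<^sup>2))"
      by (intro always_eventually allI real_le_rsqrt)
        (simp only: real_norm_def power2_abs Cauchy_Schwarz_ineq_sum)
    show "(\<lambda>n. sqrt ((\<Sum>j\<in>J n. (A n j)\<^sup>2) * (\<Sum>j\<in>J n. (B n j)\<^sup>2))) \<longlonglongrightarrow> 0"
      using tendsto_real_sqrt[OF tendsto_mult[OF A B]] by simp
  qed
  have "(\<Sum>j\<in>J n. (A n j + B n j)\<^sup>2)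
      = (\<Sum>j\<in>J n. (A n j)\<^sup>2) + 2 * (\<Sum>j\<in>J n. A n j * B n j) + (\<Sum>j\<in>J n. (B n j)\<^sup>2)" for n
    by (simp add: power2_sum sum.distrib sum_distrib_left mult.assoc)
  then show ?thesis
    using tendsto_add[OF tendsto_add[OF A tendsto_mult_left[OF cross, of 2]] B] by simp
qed

lemma tendsto_sum_sq_sum_zero:
  fixes b :: "'i \<Rightarrow> nat \<Rightarrow> nat \<Rightarrow> real"
  assumes "finite I" "\<forall>i\<in>I. (\<lambda>n. \<Sum>j\<in>J n. (b i n j)\<^sup>2) \<longlonglongrightarrow> 0"
  shows "(\<lambda>n. \<Sum>j\<in>J n. (\<Sum>i\<in>I. b i n j)\<^sup>2) \<longlonglongrightarrow> 0"
  using assms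
proof (induction I rule: finite_induct)
  case (insert i I)
  then have "(\<lambda>n. \<Sum>j\<in>J n. (b i n j + (\<Sum>i\<in>I. b i n j))\<^sup>2) \<longlonglongrightarrow> 0"
    by (intro tendsto_sum_sq_add) auto
  then show ?case using insert(1,2) by simp
qed simp

lemma sum_abs_mult_le_sum_sq:
  fixes a b :: "'a \<Rightarrow> real"
  shows "(\<Sum>j\<in>J. \<bar>a j * b j\<bar>) \<le> ((\<Sum>j\<in>J. (a j)\<^sup>2) + (\<Sum>j\<in>J. (b j)\<^sup>2)) / 2"
proof -
  have "\<bar>a j * b j\<bar> \<le> ((a j)\<^sup>2 + (b j)\<^sup>2) / 2" for j
    using sum_squares_bound[of "\<bar>a j\<bar>" "\<bar>b j\<bar>"] by (simp add: abs_mult)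
  then have "(\<Sum>j\<in>J. \<bar>a j * b j\<bar>) \<le> (\<Sum>j\<in>J. ((a j)\<^sup>2 + (b j)\<^sup>2) / 2)"
    by (rule sum_mono)
  also have "\<dots> = ((\<Sum>j\<in>J. (a j)\<^sup>2) + (\<Sum>j\<in>J. (b j)\<^sup>2)) / 2"
    by (simp only: sum_divide_distrib[symmetric] sum.distrib)
  finally show ?thesis .
qed

lemma sum_abs_mult_bounded_if_convergent:
  fixes a b :: "nat \<Rightarrow> nat \<Rightarrow> real"
  assumes "convergent (\<lambda>n. \<Sum>j\<in>J n. (a n j)\<^sup>2)" "convergent (\<lambda>n. \<Sum>j\<in>J n. (b n j)\<^sup>2)"
  obtains C where "\<And>n. (\<Sum>j\<in>J n. \<bar>a n j * b n j\<bar>) \<le> C"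
proof -
  obtain A B where A: "\<And>n. \<bar>\<Sum>j\<in>J n. (a n j)\<^sup>2\<bar> \<le> A" and B: "\<And>n. \<bar>\<Sum>j\<in>J n. (b n j)\<^sup>2\<bar> \<le> B"
    using assms[THEN convergent_imp_Bseq] by (auto simp: Bseq_def)
  have "(\<Sum>j\<in>J n. \<bar>a n j * b n j\<bar>) \<le> ((\<Sum>j\<in>J n. (a n j)\<^sup>2) + (\<Sum>j\<in>J n. (b n j)\<^sup>2)) / 2" for n
    by (rule sum_abs_mult_le_sum_sq)
  also have "\<dots> n \<le> (A + B) / 2" for n
    using abs_le_D1[OF A[of n]] abs_le_D1[OF B[of n]] by (intro divide_right_mono add_mono) auto
  finally show thesis by (rule that)
qed

lemma sum_sq_sum_expand:
  fixes a :: "'i \<Rightarrow> 'j \<Rightarrow> real"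
  shows "(\<Sum>j\<in>J. (\<Sum>i\<in>I. a i j)\<^sup>2) = (\<Sum>i\<in>I. \<Sum>k\<in>I. \<Sum>j\<in>J. a i j * a k j)"
proof -
  have "(\<Sum>j\<in>J. (\<Sum>i\<in>I. a i j)\<^sup>2) = (\<Sum>j\<in>J. \<Sum>i\<in>I. \<Sum>k\<in>I. a i j * a k j)"
    by (simp add: power2_eq_square sum_product)
  also have "\<dots> = (\<Sum>i\<in>I. \<Sum>j\<in>J. \<Sum>k\<in>I. a i j * a k j)" by (rule sum.swap)
  also have "\<dots> = (\<Sum>i\<in>I. \<Sum>k\<in>I. \<Sum>j\<in>J. a i j * a k j)" by (intro sum.cong refl sum.swap)
  finally show ?thesis .
qed

lemma tendsto_sum_sq_weighted_incr:
  fixes w y :: "'i \<Rightarrow> real \<Rightarrow> real"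
  assumes P: "\<forall>n. is_partition (q n) (L n) t (h n)" and h: "h \<longlonglongrightarrow> 0" and I: "finite I"
    and cov: "\<forall>i\<in>I. \<forall>k\<in>I. \<forall>r\<in>grid_points t.
      (\<lambda>n. weight_upto (q n) (L n) (\<lambda>j. incr (q n) (w i) j * incr (q n) (w k) j) r) \<longlonglongrightarrow> (if i = k then r else 0)"
    and yc: "\<forall>i\<in>I. continuous_on {0..t} (y i)"
  shows "(\<lambda>n. \<Sum>j\<in>{1..<L n}. (\<Sum>i\<in>I. y i (q n j) * incr (q n) (w i) j)\<^sup>2)
           \<longlonglongrightarrow> (\<Sum>i\<in>I. integral {0..t} (\<lambda>r. (y i r)\<^sup>2))"
proof -
  define dw where "dw i n j = incr (q n) (w i) j" for i n j
  have cov': "(\<lambda>n. weight_upto (q n) (L n) (\<lambda>j. dw i n j * dw k n j) r) \<longlonglongrightarrow> (if i = k then 1 else 0) * r"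
    if "i \<in> I" "k \<in> I" "r \<in> grid_points t" for i k r
    using bspec[OF bspec[OF bspec[OF cov that(1)] that(2)] that(3)] unfolding dw_def
    by (cases "i = k") auto
  have "(\<lambda>n. \<Sum>j\<in>{1..<L n}. (dw i n j)\<^sup>2) \<longlonglongrightarrow> t" if "i \<in> I" for i
    using cov'[OF that that grid_point_in_grid_points[of 1 1 t]]
    by (simp add: weight_upto_end[OF P[rule_format]] power2_eq_square)
  then have qv: "convergent (\<lambda>n. \<Sum>j\<in>{1..<L n}. (dw i n j)\<^sup>2)" if "i \<in> I" for i
    using that by (auto intro: convergentI)
  have "(\<lambda>n. \<Sum>j\<in>{1..<L n}. (y i (q n j) * dw i n j) * (y k (q n j) * dw k n j))
      \<longlonglongrightarrow> (if i = k then 1 else 0) * integral {0..t} (\<lambda>r. y i r * y k r)"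
    if i: "i \<in> I" and k: "k \<in> I" for i k
  proof -
    obtain C where "\<And>n. (\<Sum>j\<in>{1..<L n}. \<bar>dw i n j * dw k n j\<bar>) \<le> C"
      using sum_abs_mult_bounded_if_convergent[OF qv[OF i] qv[OF k]] by blast
    then have "(\<lambda>n. \<Sum>j\<in>{1..<L n}. (y i (q n j) * y k (q n j)) * (dw i n j * dw k n j))
        \<longlonglongrightarrow> (if i = k then 1 else 0) * integral {0..t} (\<lambda>r. y i r * y k r)"
      using yc i k cov'[OF i k]
      by (intro tendsto_weighted_riemann_sum[OF P h] continuous_intros) auto
    then show ?thesis by (simp add: mult_ac)
  qed
  then have "(\<lambda>n. \<Sum>i\<in>I. \<Sum>k\<in>I. \<Sum>j\<in>{1..<L n}. (y i (q n j) * dw i n j) * (y k (q n j) * dw k n j))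
      \<longlonglongrightarrow> (\<Sum>i\<in>I. \<Sum>k\<in>I. (if i = k then 1 else 0) * integral {0..t} (\<lambda>r. y i r * y k r))"
    by (intro tendsto_sum) auto
  also have "(\<Sum>i\<in>I. \<Sum>k\<in>I. (if i = k then 1 else 0) * integral {0..t} (\<lambda>r. y i r * y k r))
      = (\<Sum>i\<in>I. integral {0..t} (\<lambda>r. (y i r)\<^sup>2))"
    using I by (simp add: if_distrib[of "\<lambda>c. c * _"] sum.delta power2_eq_square cong: if_cong)
  finally show ?thesis unfolding sum_sq_sum_expand dw_def .
qed

lemma incr_add_sum_mult:
  "incr p (\<lambda>r. x r + (\<Sum>i\<in>I. y i r * w i r)) j
    = (\<Sum>i\<in>I. y i (p j) * incr p (w i) j) + (incr p x j + (\<Sum>i\<in>I. w i (p (Suc j)) * incr p (y i) j))"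
proof -
  have "y i (p (Suc j)) * w i (p (Suc j)) - y i (p j) * w i (p j)
      = y i (p j) * incr p (w i) j + w i (p (Suc j)) * incr p (y i) j" for i
    by (simp add: incr_def algebra_simps)
  then have "(\<Sum>i\<in>I. y i (p (Suc j)) * w i (p (Suc j))) - (\<Sum>i\<in>I. y i (p j) * w i (p j))
      = (\<Sum>i\<in>I. y i (p j) * incr p (w i) j) + (\<Sum>i\<in>I. w i (p (Suc j)) * incr p (y i) j)"
    by (simp only: sum_subtractf[symmetric] sum.distrib[symmetric])
  then show ?thesis
    unfolding incr_def[of p "\<lambda>r. x r + (\<Sum>i\<in>I. y i r * w i r)"] incr_def[of p x] by simp
qed

lemma has_quadratic_variation_add_sum_mult:
  fixes w y :: "'i \<Rightarrow> real \<Rightarrow> real"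
  assumes P: "\<forall>n. is_partition (q n) (L n) t (h n)" and h: "h \<longlonglongrightarrow> 0" and I: "finite I"
    and wc: "\<forall>i\<in>I. continuous_on {0..t} (w i)"
    and cov: "\<forall>i\<in>I. \<forall>k\<in>I. \<forall>r\<in>grid_points t.
      (\<lambda>n. weight_upto (q n) (L n) (\<lambda>j. incr (q n) (w i) j * incr (q n) (w k) j) r) \<longlonglongrightarrow> (if i = k then r else 0)"
    and x: "continuous_on {0..t} x" "bounded_variation_on x 0 t"
    and y: "\<forall>i\<in>I. continuous_on {0..t} (y i) \<and> bounded_variation_on (y i) 0 t"
  shows "has_quadratic_variation q L (\<lambda>r. x r + (\<Sum>i\<in>I. y i r * w i r))
           (\<Sum>i\<in>I. integral {0..t} (\<lambda>r. (y i r)\<^sup>2))"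
proof -
  have "\<exists>B. \<forall>r\<in>{0..t}. \<bar>w i r\<bar> \<le> B" if "i \<in> I" for i
    using compact_imp_bounded[OF compact_continuous_image[OF bspec[OF wc that] compact_Icc]]
    by (auto simp: bounded_iff)
  then obtain B where B: "\<And>i r. i \<in> I \<Longrightarrow> r \<in> {0..t} \<Longrightarrow> \<bar>w i r\<bar> \<le> B i" by metis
  have "(\<lambda>n. \<Sum>j\<in>{1..<L n}. (w i (q n (Suc j)) * incr (q n) (y i) j)\<^sup>2) \<longlonglongrightarrow> 0" if i: "i \<in> I" for i
  proof (rule tendsto_sum_sq_mult_bounded)
    show "\<forall>n. \<forall>j\<in>{1..<L n}. \<bar>w i (q n (Suc j))\<bar> \<le> B i"
      using B[OF i] is_partition_cell(1-3)[OF P[rule_format]] by (meson atLeastAtMost_iff order_trans)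
    show "(\<lambda>n. \<Sum>j\<in>{1..<L n}. (incr (q n) (y i) j)\<^sup>2) \<longlonglongrightarrow> 0"
      using y that by (intro tendsto_sum_sq_incr_zero[OF P h]) auto
  qed
  then have "(\<lambda>n. \<Sum>j\<in>{1..<L n}. (\<Sum>i\<in>I. w i (q n (Suc j)) * incr (q n) (y i) j)\<^sup>2) \<longlonglongrightarrow> 0"
    by (rule tendsto_sum_sq_sum_zero[OF I ballI])
  \<comment> \<open>Only the Riemann-Ito part carries quadratic variation; the bounded variation part is negligible.\<close>
  with tendsto_sum_sq_incr_zero[OF P h x]
  have remainder: "(\<lambda>n. \<Sum>j\<in>{1..<L n}.
      (incr (q n) x j + (\<Sum>i\<in>I. w i (q n (Suc j)) * incr (q n) (y i) j))\<^sup>2) \<longlonglongrightarrow> 0"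
    by (rule tendsto_sum_sq_add)
  have "\<forall>i\<in>I. continuous_on {0..t} (y i)" using y by blast
  from tendsto_sum_sq_weighted_incr[OF P h I cov this] remainder
  show ?thesis unfolding has_quadratic_variation_def incr_add_sum_mult by (rule tendsto_sum_sq_add)
qed

section \<open>Discrete covariations of independent Wiener processes\<close>

lemma AE_tendsto_zero_if_summable_sq_integral:
  fixes S :: "nat \<Rightarrow> 'a \<Rightarrow> real"
  assumes meas: "\<And>n. S n \<in> borel_measurable M"
    and int: "\<And>n. integrable M (\<lambda>x. (S n x)\<^sup>2)"
    and summ: "summable (\<lambda>n. integral\<^sup>L M (\<lambda>x. (S n x)\<^sup>2))"
  shows "AE x in M. (\<lambda>n. S n x) \<longlonglongrightarrow> 0"
proof -
  have "(\<integral>\<^sup>+ x. (\<Sum>n. ennreal ((S n x)\<^sup>2)) \<partial>M) = (\<Sum>n. \<integral>\<^sup>+ x. ennreal ((S n x)\<^sup>2) \<partial>M)"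
    by (rule nn_integral_suminf) (use meas in auto)
  also have "\<dots> = (\<Sum>n. ennreal (integral\<^sup>L M (\<lambda>x. (S n x)\<^sup>2)))"
    by (intro arg_cong[where f=suminf] ext nn_integral_eq_integral int) auto
  also have "\<dots> = ennreal (\<Sum>n. integral\<^sup>L M (\<lambda>x. (S n x)\<^sup>2))"
    by (rule suminf_ennreal2[OF _ summ]) (simp add: integral_nonneg_AE)
  finally have fin: "(\<integral>\<^sup>+ x. (\<Sum>n. ennreal ((S n x)\<^sup>2)) \<partial>M) \<noteq> \<infinity>" by simp
  have "AE x in M. (\<Sum>n. ennreal ((S n x)\<^sup>2)) \<noteq> \<infinity>"
    by (rule nn_integral_noteq_infinite[OF _ fin]) (use meas in auto)
  then show ?thesis
  proof (rule AE_mp, intro AE_I2 impI)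
    fix x assume "(\<Sum>n. ennreal ((S n x)\<^sup>2)) \<noteq> \<infinity>"
    then have "summable (\<lambda>n. (S n x)\<^sup>2)" by (intro summable_suminf_not_top) auto
    then have "(\<lambda>n. (S n x)\<^sup>2) \<longlonglongrightarrow> 0" by (rule summable_LIMSEQ_zero)
    then have "(\<lambda>n. sqrt ((S n x)\<^sup>2)) \<longlonglongrightarrow> sqrt 0" by (rule tendsto_real_sqrt)
    then have "(\<lambda>n. \<bar>S n x\<bar>) \<longlonglongrightarrow> 0" by simp
    then show "(\<lambda>n. S n x) \<longlonglongrightarrow> 0" by (simp add: tendsto_rabs_zero_iff)
  qed
qed

lemma integral_sq_sum_orthogonal_le:
  fixes X :: "'i::linorder \<Rightarrow> 'a \<Rightarrow> real"
  assumes fin: "finite I"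
    and orth: "\<And>j l. j \<in> I \<Longrightarrow> l \<in> I \<Longrightarrow> j < l \<Longrightarrow>
      integrable M (\<lambda>\<omega>. X j \<omega> * X l \<omega>) \<and> integral\<^sup>L M (\<lambda>\<omega>. X j \<omega> * X l \<omega>) = 0"
    and diag: "\<And>j. j \<in> I \<Longrightarrow> integrable M (\<lambda>\<omega>. (X j \<omega>)\<^sup>2) \<and> integral\<^sup>L M (\<lambda>\<omega>. (X j \<omega>)\<^sup>2) \<le> v j"
  shows "integrable M (\<lambda>\<omega>. (\<Sum>j\<in>I. X j \<omega>)\<^sup>2)"
    and "integral\<^sup>L M (\<lambda>\<omega>. (\<Sum>j\<in>I. X j \<omega>)\<^sup>2) \<le> (\<Sum>j\<in>I. v j)"
proof -
  have pair: "integrable M (\<lambda>\<omega>. X j \<omega> * X l \<omega>) \<and> integral\<^sup>L M (\<lambda>\<omega>. X j \<omega> * X l \<omega>)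
      = (if j = l then integral\<^sup>L M (\<lambda>\<omega>. (X j \<omega>)\<^sup>2) else 0)" if "j \<in> I" "l \<in> I" for j l
    using orth[OF that] orth[OF that(2,1)] diag[OF that(1)]
    by (cases j l rule: linorder_cases) (auto simp: mult.commute power2_eq_square)
  have eq: "(\<lambda>\<omega>. (\<Sum>j\<in>I. X j \<omega>)\<^sup>2) = (\<lambda>\<omega>. \<Sum>j\<in>I. \<Sum>l\<in>I. X j \<omega> * X l \<omega>)"
    by (simp add: power2_eq_square sum_product)
  show "integrable M (\<lambda>\<omega>. (\<Sum>j\<in>I. X j \<omega>)\<^sup>2)"
    unfolding eq using pair by (intro Bochner_Integration.integrable_sum) auto
  have "integral\<^sup>L M (\<lambda>\<omega>. (\<Sum>j\<in>I. X j \<omega>)\<^sup>2) = (\<Sum>j\<in>I. \<Sum>l\<in>I. integral\<^sup>L M (\<lambda>\<omega>. X j \<omega> * X l \<omega>))"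
    unfolding eq using pair by (simp add: Bochner_Integration.integral_sum Bochner_Integration.integrable_sum)
  also have "\<dots> = (\<Sum>j\<in>I. integral\<^sup>L M (\<lambda>\<omega>. (X j \<omega>)\<^sup>2))"
    using fin pair by (simp add: sum.delta)
  also have "\<dots> \<le> (\<Sum>j\<in>I. v j)" using diag by (intro sum_mono) auto
  finally show "integral\<^sup>L M (\<lambda>\<omega>. (\<Sum>j\<in>I. X j \<omega>)\<^sup>2) \<le> (\<Sum>j\<in>I. v j)" .
qed

lemma normal_distributed_moments:
  fixes X :: "'a \<Rightarrow> real"
  assumes P: "prob_space M" and v: "0 < v"
    and D: "distributed M lborel X (\<lambda>x. ennreal (normal_density 0 (sqrt v) x))"
  shows "integrable M (\<lambda>\<omega>. X \<omega> ^ k)"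
    and "integral\<^sup>L M X = 0"
    and "integral\<^sup>L M (\<lambda>\<omega>. (X \<omega>)\<^sup>2) = v"
    and "integral\<^sup>L M (\<lambda>\<omega>. X \<omega> ^ 4) = 3 * v\<^sup>2"
proof -
  have s: "0 < sqrt v" using v by simp
  show "integrable M (\<lambda>\<omega>. X \<omega> ^ k)"
    using distributed_integrable[OF D, of "\<lambda>x. x ^ k"] integrable_normal_moment[OF s, of 0 k] by simp
  show "integral\<^sup>L M X = 0"
    using prob_space.normal_distributed_expectation[OF P s D] by simp
  have "integral\<^sup>L M (\<lambda>\<omega>. (X \<omega>)\<^sup>2) = (\<integral>x. normal_density 0 (sqrt v) x * x ^ (2 * 1) \<partial>lborel)"
    using distributed_integral[OF D, of "\<lambda>x. x ^ 2"] by simp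
  also have "\<dots> = v" using integral_normal_moment_even[OF s, of 0 1] v by simp
  finally show "integral\<^sup>L M (\<lambda>\<omega>. (X \<omega>)\<^sup>2) = v" .
  have "integral\<^sup>L M (\<lambda>\<omega>. X \<omega> ^ 4) = (\<integral>x. normal_density 0 (sqrt v) x * x ^ (2 * 2) \<partial>lborel)"
    using distributed_integral[OF D, of "\<lambda>x. x ^ 4"] by simp
  also have "\<dots> = 3 * v\<^sup>2" using integral_normal_moment_even[OF s, of 0 2] v
    by (simp add: fact_numeral power2_eq_square field_simps)
  finally show "integral\<^sup>L M (\<lambda>\<omega>. X \<omega> ^ 4) = 3 * v\<^sup>2" .
qed


lemma LIMSEQ_zero_summable_subseq:
  fixes h :: "nat \<Rightarrow> real"
  assumes "h \<longlonglongrightarrow> 0"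
  obtains \<phi> where "strict_mono \<phi>" "summable (\<lambda>n. h (\<phi> n))"
proof -
  have "\<exists>N. \<forall>k\<ge>N. \<bar>h k\<bar> < (1/2) ^ n" for n
    using LIMSEQ_D[OF assms, of "(1/2) ^ n"] by auto
  then obtain g where g: "\<And>n k. g n \<le> k \<Longrightarrow> \<bar>h k\<bar> < (1/2) ^ n" by metis
  define \<phi> where "\<phi> n = (\<Sum>i\<le>n. g i) + n" for n
  have "strict_mono \<phi>" unfolding strict_mono_Suc_iff \<phi>_def by simp
  moreover have "g n \<le> \<phi> n" for n
    using member_le_sum[of n "{..n}" g] by (simp add: \<phi>_def)
  then have "norm (h (\<phi> n)) \<le> (1/2) ^ n" for n using less_imp_le[OF g] by simp
  then have "summable (\<lambda>n. h (\<phi> n))"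
    using summable_comparison_test'[of "\<lambda>n. (1/2::real) ^ n" 0 "\<lambda>n. h (\<phi> n)"] by simp
  ultimately show thesis by (rule that)
qed

context prob_space
begin

lemma wiener_process_measurable:
  assumes "wiener_process M W" "0 \<le> a"
  shows "W a \<in> borel_measurable M"
  using assms unfolding wiener_process_def by blast

lemma wiener_process_increment_moments:
  assumes W: "wiener_process M W" and ab: "0 \<le> a" "a \<le> b"
  shows "integrable M (\<lambda>\<omega>. (W b \<omega> - W a \<omega>) ^ k)"
    and "expectation (\<lambda>\<omega>. W b \<omega> - W a \<omega>) = 0"
    and "expectation (\<lambda>\<omega>. (W b \<omega> - W a \<omega>)\<^sup>2) = b - a"
    and "expectation (\<lambda>\<omega>. (W b \<omega> - W a \<omega>) ^ 4) = 3 * (b - a)\<^sup>2"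
proof -
  have "integrable M (\<lambda>\<omega>. (W b \<omega> - W a \<omega>) ^ k) \<and>
    expectation (\<lambda>\<omega>. W b \<omega> - W a \<omega>) = 0 \<and>
    expectation (\<lambda>\<omega>. (W b \<omega> - W a \<omega>)\<^sup>2) = b - a \<and>
    expectation (\<lambda>\<omega>. (W b \<omega> - W a \<omega>) ^ 4) = 3 * (b - a)\<^sup>2"
  proof (cases "a = b")
    case False
    then have "0 < b - a" using ab by simp
    moreover have "distributed M lborel (\<lambda>\<omega>. W b \<omega> - W a \<omega>)
        (\<lambda>x. ennreal (normal_density 0 (sqrt (b - a)) x))"
      using W ab False unfolding wiener_process_def by auto
    ultimately show ?thesis
      using normal_distributed_moments[OF prob_space_axioms] by blast
  qed (simp add: power_0_left)
  then show "integrable M (\<lambda>\<omega>. (W b \<omega> - W a \<omega>) ^ k)"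
    and "expectation (\<lambda>\<omega>. W b \<omega> - W a \<omega>) = 0"
    and "expectation (\<lambda>\<omega>. (W b \<omega> - W a \<omega>)\<^sup>2) = b - a"
    and "expectation (\<lambda>\<omega>. (W b \<omega> - W a \<omega>) ^ 4) = 3 * (b - a)\<^sup>2" by auto
qed

lemma indep_vars_imp_indep_var:
  assumes ind: "indep_vars M' X I" and ab: "a \<in> I" "b \<in> I" "a \<noteq> b"
  shows "indep_var (M' a) (X a) (M' b) (X b)"
proof -
  have "indep_var (PiM {a} M') (\<lambda>\<omega>. restrict (\<lambda>i. X i \<omega>) {a}) (PiM {b} M') (\<lambda>\<omega>. restrict (\<lambda>i. X i \<omega>) {b})"
    by (rule indep_var_restrict[OF ind]) (use ab in auto)
  then have "indep_var (M' a) ((\<lambda>f. f a) \<circ> (\<lambda>\<omega>. restrict (\<lambda>i. X i \<omega>) {a}))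
      (M' b) ((\<lambda>f. f b) \<circ> (\<lambda>\<omega>. restrict (\<lambda>i. X i \<omega>) {b}))"
    by (rule indep_var_compose) (auto intro: measurable_component_singleton)
  then show ?thesis by (simp add: comp_def)
qed

lemma wiener_process_indep_increments:
  assumes W: "wiener_process M W" and ord: "0 \<le> a" "a < b" "b \<le> c" "c < d"
  shows "indep_var borel (\<lambda>\<omega>. W b \<omega> - W a \<omega>) borel (\<lambda>\<omega>. W d \<omega> - W c \<omega>)"
proof -
  have IV: "\<And>(r::nat \<Rightarrow> real) k. 0 \<le> r 0 \<and> (\<forall>j<k. r j < r (Suc j)) \<Longrightarrow>
        indep_vars (\<lambda>_. borel) (\<lambda>j \<omega>. W (r (Suc j)) \<omega> - W (r j) \<omega>) {..<k}"
    using W unfolding wiener_process_def by blast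
  show ?thesis
  proof (cases "b = c")
    case True
    define r :: "nat \<Rightarrow> real" where "r j = (if j = 0 then a else if j = 1 then b else d)" for j
    have "indep_vars (\<lambda>_. borel) (\<lambda>j \<omega>. W (r (Suc j)) \<omega> - W (r j) \<omega>) {..<2}"
      using ord True by (intro IV) (auto simp: r_def less_2_cases_iff)
    from indep_vars_imp_indep_var[OF this, of 0 1] show ?thesis using True by (simp add: r_def)
  next
    case False
    define r :: "nat \<Rightarrow> real" where "r j = (if j = 0 then a else if j = 1 then b else if j = 2 then c else d)" for j
    have "j < 3 \<Longrightarrow> j = 0 \<or> j = 1 \<or> j = 2" for j :: nat by auto
    then have "indep_vars (\<lambda>_. borel) (\<lambda>j \<omega>. W (r (Suc j)) \<omega> - W (r j) \<omega>) {..<3}"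
      using ord False by (intro IV) (auto simp: r_def)
    from indep_vars_imp_indep_var[OF this, of 0 2] show ?thesis by (simp add: r_def numeral_eq_Suc)
  qed
qed

lemma wiener_process_indep_increments_integral:
  fixes f g :: "real \<Rightarrow> real"
  assumes W: "wiener_process M W" and ord: "0 \<le> a" "a \<le> b" "b \<le> c" "c \<le> d"
    and f: "f \<in> borel_measurable borel" and g: "g \<in> borel_measurable borel"
    and fi: "integrable M (\<lambda>\<omega>. f (W b \<omega> - W a \<omega>))"
    and gi: "integrable M (\<lambda>\<omega>. g (W d \<omega> - W c \<omega>))"
  shows "integrable M (\<lambda>\<omega>. f (W b \<omega> - W a \<omega>) * g (W d \<omega> - W c \<omega>))"
    and "expectation (\<lambda>\<omega>. f (W b \<omega> - W a \<omega>) * g (W d \<omega> - W c \<omega>)) =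
         expectation (\<lambda>\<omega>. f (W b \<omega> - W a \<omega>)) * expectation (\<lambda>\<omega>. g (W d \<omega> - W c \<omega>))"
proof -
  have "integrable M (\<lambda>\<omega>. f (W b \<omega> - W a \<omega>) * g (W d \<omega> - W c \<omega>)) \<and>
    expectation (\<lambda>\<omega>. f (W b \<omega> - W a \<omega>) * g (W d \<omega> - W c \<omega>)) =
         expectation (\<lambda>\<omega>. f (W b \<omega> - W a \<omega>)) * expectation (\<lambda>\<omega>. g (W d \<omega> - W c \<omega>))"
  proof (cases "a = b \<or> c = d")
    case True
    \<comment> \<open>Independence in \<open>wiener_process\<close> is only postulated for strictly increasing times;
      here one increment is the constant 0.\<close>
    then show ?thesis using fi gi by (auto simp: prob_space)
  next
    case False
    then have "indep_var borel (\<lambda>\<omega>. W b \<omega> - W a \<omega>) borel (\<lambda>\<omega>. W d \<omega> - W c \<omega>)"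
      using ord by (intro wiener_process_indep_increments[OF W]) auto
    from indep_var_compose[OF this f g]
    have "indep_var borel (\<lambda>\<omega>. f (W b \<omega> - W a \<omega>)) borel (\<lambda>\<omega>. g (W d \<omega> - W c \<omega>))"
      by (simp add: comp_def)
    then show ?thesis
      using indep_var_lebesgue_integral indep_var_integrable fi gi by blast
  qed
  then show "integrable M (\<lambda>\<omega>. f (W b \<omega> - W a \<omega>) * g (W d \<omega> - W c \<omega>))"
    and "expectation (\<lambda>\<omega>. f (W b \<omega> - W a \<omega>) * g (W d \<omega> - W c \<omega>)) =
         expectation (\<lambda>\<omega>. f (W b \<omega> - W a \<omega>)) * expectation (\<lambda>\<omega>. g (W d \<omega> - W c \<omega>))" by auto
qed

lemma indep_processes_integral:
  fixes F G :: "(real \<Rightarrow> real) \<Rightarrow> real"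
  assumes ind: "indep_processes M t W I" and ik: "i \<in> I" "k \<in> I" "i \<noteq> k"
    and F: "F \<in> borel_measurable (PiM {0..t} (\<lambda>_. borel))"
    and G: "G \<in> borel_measurable (PiM {0..t} (\<lambda>_. borel))"
    and Fi: "integrable M (\<lambda>\<omega>. F (restrict (\<lambda>s. W i s \<omega>) {0..t}))"
    and Gi: "integrable M (\<lambda>\<omega>. G (restrict (\<lambda>s. W k s \<omega>) {0..t}))"
  shows "integrable M (\<lambda>\<omega>. F (restrict (\<lambda>s. W i s \<omega>) {0..t}) * G (restrict (\<lambda>s. W k s \<omega>) {0..t}))"
    and "expectation (\<lambda>\<omega>. F (restrict (\<lambda>s. W i s \<omega>) {0..t}) * G (restrict (\<lambda>s. W k s \<omega>) {0..t}))
       = expectation (\<lambda>\<omega>. F (restrict (\<lambda>s. W i s \<omega>) {0..t})) *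
         expectation (\<lambda>\<omega>. G (restrict (\<lambda>s. W k s \<omega>) {0..t}))"
proof -
  have "indep_var (PiM {0..t} (\<lambda>_. borel)) (\<lambda>\<omega>. restrict (\<lambda>s. W i s \<omega>) {0..t})
      (PiM {0..t} (\<lambda>_. borel)) (\<lambda>\<omega>. restrict (\<lambda>s. W k s \<omega>) {0..t})"
    using indep_vars_imp_indep_var[OF ind[unfolded indep_processes_def] ik] by simp
  from indep_var_compose[OF this F G]
  have iv: "indep_var borel (\<lambda>\<omega>. F (restrict (\<lambda>s. W i s \<omega>) {0..t}))
      borel (\<lambda>\<omega>. G (restrict (\<lambda>s. W k s \<omega>) {0..t}))"
    by (simp add: comp_def)
  show "integrable M (\<lambda>\<omega>. F (restrict (\<lambda>s. W i s \<omega>) {0..t}) * G (restrict (\<lambda>s. W k s \<omega>) {0..t}))"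
    by (rule indep_var_integrable[OF iv Fi Gi])
  show "expectation (\<lambda>\<omega>. F (restrict (\<lambda>s. W i s \<omega>) {0..t}) * G (restrict (\<lambda>s. W k s \<omega>) {0..t}))
       = expectation (\<lambda>\<omega>. F (restrict (\<lambda>s. W i s \<omega>) {0..t})) *
         expectation (\<lambda>\<omega>. G (restrict (\<lambda>s. W k s \<omega>) {0..t}))"
    by (rule indep_var_lebesgue_integral[OF iv Fi Gi])
qed

lemma centred_sq_increments_orthogonal:
  assumes W: "wiener_process M W" and ord: "0 \<le> a" "a \<le> b" "b \<le> c" "c \<le> d"
  shows "integrable M (\<lambda>\<omega>. ((W b \<omega> - W a \<omega>)\<^sup>2 - (b - a)) * ((W d \<omega> - W c \<omega>)\<^sup>2 - (d - c)))"
    and "expectation (\<lambda>\<omega>. ((W b \<omega> - W a \<omega>)\<^sup>2 - (b - a)) * ((W d \<omega> - W c \<omega>)\<^sup>2 - (d - c))) = 0"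
proof -
  have centred: "integrable M (\<lambda>\<omega>. (W v \<omega> - W u \<omega>)\<^sup>2 - (v - u))"
    "expectation (\<lambda>\<omega>. (W v \<omega> - W u \<omega>)\<^sup>2 - (v - u)) = 0" if "0 \<le> u" "u \<le> v" for u v
    using wiener_process_increment_moments[OF W that] by (simp_all add: prob_space)
  note indep = wiener_process_indep_increments_integral[OF W ord,
      of "\<lambda>x. x\<^sup>2 - (b - a)" "\<lambda>x. x\<^sup>2 - (d - c)"]
  show "integrable M (\<lambda>\<omega>. ((W b \<omega> - W a \<omega>)\<^sup>2 - (b - a)) * ((W d \<omega> - W c \<omega>)\<^sup>2 - (d - c)))"
    using indep(1) centred(1) ord by simp
  show "expectation (\<lambda>\<omega>. ((W b \<omega> - W a \<omega>)\<^sup>2 - (b - a)) * ((W d \<omega> - W c \<omega>)\<^sup>2 - (d - c))) = 0"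
    using indep(2) centred ord by simp
qed

lemma centred_sq_increment_variance:
  assumes W: "wiener_process M W" and ab: "0 \<le> a" "a \<le> b"
  shows "integrable M (\<lambda>\<omega>. ((W b \<omega> - W a \<omega>)\<^sup>2 - (b - a))\<^sup>2)"
    and "expectation (\<lambda>\<omega>. ((W b \<omega> - W a \<omega>)\<^sup>2 - (b - a))\<^sup>2) = 2 * (b - a)\<^sup>2"
proof -
  note mom = wiener_process_increment_moments[OF W ab]
  have sq: "((W b \<omega> - W a \<omega>)\<^sup>2 - (b - a))\<^sup>2
      = (W b \<omega> - W a \<omega>) ^ 4 - 2 * (b - a) * (W b \<omega> - W a \<omega>)\<^sup>2 + (b - a)\<^sup>2" for \<omega>
    by (simp add: power2_eq_square power4_eq_xxxx algebra_simps)
  show "integrable M (\<lambda>\<omega>. ((W b \<omega> - W a \<omega>)\<^sup>2 - (b - a))\<^sup>2)"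
    unfolding sq using mom(1) by auto
  show "expectation (\<lambda>\<omega>. ((W b \<omega> - W a \<omega>)\<^sup>2 - (b - a))\<^sup>2) = 2 * (b - a)\<^sup>2"
  proof -
    have "expectation (\<lambda>\<omega>. ((W b \<omega> - W a \<omega>)\<^sup>2 - (b - a))\<^sup>2)
        = expectation (\<lambda>\<omega>. (W b \<omega> - W a \<omega>) ^ 4) - 2 * (b - a) * expectation (\<lambda>\<omega>. (W b \<omega> - W a \<omega>)\<^sup>2)
          + (b - a)\<^sup>2"
      unfolding sq using mom(1)[of 4] mom(1)[of 2] by (simp add: prob_space)
    also have "\<dots> = 2 * (b - a)\<^sup>2"
      by (simp only: mom(3,4)) (simp add: power2_eq_square algebra_simps)
    finally show ?thesis .
  qed
qed

lemma indep_processes_increment_products: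
  assumes ind: "indep_processes M t W I" and ik: "i \<in> I" "k \<in> I" "i \<noteq> k"
    and pts: "a \<in> {0..t}" "b \<in> {0..t}" "c \<in> {0..t}" "d \<in> {0..t}"
    and Fi: "integrable M (\<lambda>\<omega>. (W i b \<omega> - W i a \<omega>) * (W i d \<omega> - W i c \<omega>))"
    and Gi: "integrable M (\<lambda>\<omega>. (W k b \<omega> - W k a \<omega>) * (W k d \<omega> - W k c \<omega>))"
  shows "integrable M (\<lambda>\<omega>. ((W i b \<omega> - W i a \<omega>) * (W i d \<omega> - W i c \<omega>)) *
      ((W k b \<omega> - W k a \<omega>) * (W k d \<omega> - W k c \<omega>)))"
    and "expectation (\<lambda>\<omega>. ((W i b \<omega> - W i a \<omega>) * (W i d \<omega> - W i c \<omega>)) *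
      ((W k b \<omega> - W k a \<omega>) * (W k d \<omega> - W k c \<omega>)))
       = expectation (\<lambda>\<omega>. (W i b \<omega> - W i a \<omega>) * (W i d \<omega> - W i c \<omega>)) *
         expectation (\<lambda>\<omega>. (W k b \<omega> - W k a \<omega>) * (W k d \<omega> - W k c \<omega>))"
proof -
  define F :: "(real \<Rightarrow> real) \<Rightarrow> real" where "F x = (x b - x a) * (x d - x c)" for x
  have "(\<lambda>x. x u) \<in> borel_measurable (PiM {0..t} (\<lambda>_. borel))" if "u \<in> {0..t}" for u
    using measurable_component_singleton[OF that, of "\<lambda>_. borel"] by simp
  then have F: "F \<in> borel_measurable (PiM {0..t} (\<lambda>_. borel))"
    unfolding F_def using pts by measurable
  have F_restrict: "F (restrict f {0..t}) = (f b - f a) * (f d - f c)" for f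
    using pts by (simp add: F_def)
  note indep_processes_integral[OF ind ik F F]
  then show "integrable M (\<lambda>\<omega>. ((W i b \<omega> - W i a \<omega>) * (W i d \<omega> - W i c \<omega>)) *
      ((W k b \<omega> - W k a \<omega>) * (W k d \<omega> - W k c \<omega>)))"
    and "expectation (\<lambda>\<omega>. ((W i b \<omega> - W i a \<omega>) * (W i d \<omega> - W i c \<omega>)) *
      ((W k b \<omega> - W k a \<omega>) * (W k d \<omega> - W k c \<omega>)))
       = expectation (\<lambda>\<omega>. (W i b \<omega> - W i a \<omega>) * (W i d \<omega> - W i c \<omega>)) *
         expectation (\<lambda>\<omega>. (W k b \<omega> - W k a \<omega>) * (W k d \<omega> - W k c \<omega>))"
    unfolding F_restrict using Fi Gi by auto
qed

lemma centred_increment_products_orthogonal: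
  assumes wiener: "\<forall>i\<in>I. wiener_process M (W i)" and ind: "indep_processes M t W I"
    and ik: "i \<in> I" "k \<in> I" and ord: "0 \<le> a" "a \<le> b" "b \<le> c" "c \<le> d" "d \<le> t"
  defines "Y u v \<omega> \<equiv> (W i v \<omega> - W i u \<omega>) * (W k v \<omega> - W k u \<omega>) - (if i = k then v - u else 0)"
  shows "integrable M (\<lambda>\<omega>. Y a b \<omega> * Y c d \<omega>)" and "expectation (\<lambda>\<omega>. Y a b \<omega> * Y c d \<omega>) = 0"
proof -
  have "integrable M (\<lambda>\<omega>. Y a b \<omega> * Y c d \<omega>) \<and> expectation (\<lambda>\<omega>. Y a b \<omega> * Y c d \<omega>) = 0"
  proof (cases "i = k")
    case True
    then show ?thesis
      using centred_sq_increments_orthogonal[of "W k" a b c d] wiener ik ord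
      by (simp add: Y_def power2_eq_square)
  next
    case False
    have same: "integrable M (\<lambda>\<omega>. (W l b \<omega> - W l a \<omega>) * (W l d \<omega> - W l c \<omega>)) \<and>
        expectation (\<lambda>\<omega>. (W l b \<omega> - W l a \<omega>) * (W l d \<omega> - W l c \<omega>)) = 0" if "l \<in> I" for l
    proof -
      have W: "wiener_process M (W l)" using wiener that by blast
      note mom = wiener_process_increment_moments[OF W]
      show ?thesis
        using wiener_process_indep_increments_integral[OF W ord(1-4), of "\<lambda>x. x" "\<lambda>x. x"]
          mom(1)[of a b 1] mom(1)[of c d 1] mom(2)[of a b] ord by simp
    qed
    have "Y a b \<omega> * Y c d \<omega> = ((W i b \<omega> - W i a \<omega>) * (W i d \<omega> - W i c \<omega>)) *
        ((W k b \<omega> - W k a \<omega>) * (W k d \<omega> - W k c \<omega>))" for \<omega>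
      using False by (simp add: Y_def mult_ac)
    then show ?thesis
      using indep_processes_increment_products[OF ind ik False _ _ _ _ conjunct1[OF same[OF ik(1)]]
          conjunct1[OF same[OF ik(2)]]] same[OF ik(1)] ord by simp
  qed
  then show "integrable M (\<lambda>\<omega>. Y a b \<omega> * Y c d \<omega>)" and "expectation (\<lambda>\<omega>. Y a b \<omega> * Y c d \<omega>) = 0"
    by auto
qed

lemma centred_increment_product_sq:
  assumes wiener: "\<forall>i\<in>I. wiener_process M (W i)" and ind: "indep_processes M t W I"
    and ik: "i \<in> I" "k \<in> I" and ab: "0 \<le> a" "a \<le> b" "b \<le> t"
  defines "Y u v \<omega> \<equiv> (W i v \<omega> - W i u \<omega>) * (W k v \<omega> - W k u \<omega>) - (if i = k then v - u else 0)"
  shows "integrable M (\<lambda>\<omega>. (Y a b \<omega>)\<^sup>2)" and "expectation (\<lambda>\<omega>. (Y a b \<omega>)\<^sup>2) \<le> 2 * (b - a)\<^sup>2"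
proof -
  have "integrable M (\<lambda>\<omega>. (Y a b \<omega>)\<^sup>2) \<and> expectation (\<lambda>\<omega>. (Y a b \<omega>)\<^sup>2) \<le> 2 * (b - a)\<^sup>2"
  proof (cases "i = k")
    case True
    then show ?thesis
      using centred_sq_increment_variance[of "W k" a b] wiener ik ab
      by (simp add: Y_def power2_eq_square)
  next
    case False
    have same: "integrable M (\<lambda>\<omega>. (W l b \<omega> - W l a \<omega>) * (W l b \<omega> - W l a \<omega>)) \<and>
        expectation (\<lambda>\<omega>. (W l b \<omega> - W l a \<omega>) * (W l b \<omega> - W l a \<omega>)) = b - a" if "l \<in> I" for l
      using wiener_process_increment_moments(1)[of "W l" a b 2]
        wiener_process_increment_moments(3)[of "W l" a b] wiener that ab
      by (simp add: power2_eq_square)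
    have "(Y a b \<omega>)\<^sup>2 = ((W i b \<omega> - W i a \<omega>) * (W i b \<omega> - W i a \<omega>)) *
        ((W k b \<omega> - W k a \<omega>) * (W k b \<omega> - W k a \<omega>))" for \<omega>
      using False by (simp add: Y_def power2_eq_square mult_ac)
    then show ?thesis
      using indep_processes_increment_products[OF ind ik False _ _ _ _ conjunct1[OF same[OF ik(1)]]
          conjunct1[OF same[OF ik(2)]]] same[OF ik(1)] same[OF ik(2)] ab
      by (simp add: power2_eq_square)
  qed
  then show "integrable M (\<lambda>\<omega>. (Y a b \<omega>)\<^sup>2)" and "expectation (\<lambda>\<omega>. (Y a b \<omega>)\<^sup>2) \<le> 2 * (b - a)\<^sup>2"
    by auto
qed

lemma expectation_sq_covariation_error:
  fixes r :: real
  assumes wiener: "\<forall>i\<in>I. wiener_process M (W i)" and ind: "indep_processes M t W I"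
    and P: "is_partition p L t h" and ik: "i \<in> I" "k \<in> I"
  defines "D \<omega> \<equiv> weight_upto p L (\<lambda>j. incr p (\<lambda>s. W i s \<omega>) j * incr p (\<lambda>s. W k s \<omega>) j) r
      - (if i = k then weight_upto p L (incr p (\<lambda>s. s)) r else 0)"
  shows "D \<in> borel_measurable M" and "integrable M (\<lambda>\<omega>. (D \<omega>)\<^sup>2)"
    and "expectation (\<lambda>\<omega>. (D \<omega>)\<^sup>2) \<le> 2 * h * t"
proof -
  define Y where "Y u v \<omega> = (W i v \<omega> - W i u \<omega>) * (W k v \<omega> - W k u \<omega>) - (if i = k then v - u else 0)"
    for u v \<omega>
  define X where "X j \<omega> = (if p (Suc j) \<le> r then Y (p j) (p (Suc j)) \<omega> else 0)" for j \<omega>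
  have D: "D \<omega> = (\<Sum>j\<in>{1..<L}. X j \<omega>)" for \<omega>
    unfolding D_def X_def Y_def weight_upto_def incr_def
    by (cases "i = k") (auto simp: sum_subtractf[symmetric] intro!: sum.cong)
  have XX: "X j \<omega> * X l \<omega> = (if p (Suc j) \<le> r \<and> p (Suc l) \<le> r then Y (p j) (p (Suc j)) \<omega> * Y (p l) (p (Suc l)) \<omega> else 0)"
    for j l \<omega> by (simp add: X_def)
  have orth: "integrable M (\<lambda>\<omega>. X j \<omega> * X l \<omega>) \<and> expectation (\<lambda>\<omega>. X j \<omega> * X l \<omega>) = 0"
    if "j \<in> {1..<L}" "l \<in> {1..<L}" "j < l" for j l
  proof -
    have "p (Suc j) \<le> p l" using is_partition_mono[OF P, of "Suc j" l] that by auto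
    then show ?thesis
      using centred_increment_products_orthogonal[OF wiener ind ik, of "p j" "p (Suc j)" "p l" "p (Suc l)"]
        is_partition_cell[OF P that(1)] is_partition_cell[OF P that(2)]
      unfolding XX Y_def by (cases "p (Suc j) \<le> r \<and> p (Suc l) \<le> r") auto
  qed
  have diag: "integrable M (\<lambda>\<omega>. (X j \<omega>)\<^sup>2) \<and> expectation (\<lambda>\<omega>. (X j \<omega>)\<^sup>2) \<le> 2 * h * (p (Suc j) - p j)"
    if "j \<in> {1..<L}" for j
  proof -
    note cell = is_partition_cell[OF P that]
    have "2 * (p (Suc j) - p j)\<^sup>2 \<le> 2 * h * (p (Suc j) - p j)"
      using cell by (simp add: power2_eq_square mult_right_mono)
    then show ?thesis
      using centred_increment_product_sq[OF wiener ind ik, of "p j" "p (Suc j)"] cell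
      unfolding X_def Y_def by (cases "p (Suc j) \<le> r") auto
  qed
  note sum_orth = integral_sq_sum_orthogonal_le[of "{1..<L}" M X, OF _ orth diag]
  show "integrable M (\<lambda>\<omega>. (D \<omega>)\<^sup>2)" unfolding D using sum_orth(1) by simp
  have "expectation (\<lambda>\<omega>. (D \<omega>)\<^sup>2) \<le> (\<Sum>j\<in>{1..<L}. 2 * h * (p (Suc j) - p j))"
    unfolding D using sum_orth(2) by simp
  also have "\<dots> = 2 * h * t"
    using P by (simp add: sum_distrib_left[symmetric] sum_Suc_diff' is_partition_def)
  finally show "expectation (\<lambda>\<omega>. (D \<omega>)\<^sup>2) \<le> 2 * h * t" .
  have "W l u \<in> borel_measurable M" if "l \<in> I" "0 \<le> u" for l u
    using wiener_process_measurable[of "W l" u] wiener that by auto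
  then have "X j \<in> borel_measurable M" if "j \<in> {1..<L}" for j
    using is_partition_cell[OF P that] ik unfolding X_def Y_def
    by (auto intro!: borel_measurable_times borel_measurable_diff)
  then show "D \<in> borel_measurable M" unfolding D[abs_def] by auto
qed

lemma AE_obtain_prob_one_subset:
  assumes "AE \<omega> in M. P \<omega>" and "prob A = 1"
  obtains \<Omega>' where "\<Omega>' \<in> events" "prob \<Omega>' = 1" "\<Omega>' \<subseteq> A" "\<And>\<omega>. \<omega> \<in> \<Omega>' \<Longrightarrow> P \<omega>"
proof -
  have "AE \<omega> in M. \<omega> \<in> A \<and> P \<omega>" using AE_prob_1[OF assms(2)] assms(1) by eventually_elim blast
  then obtain N where N: "\<And>\<omega>. \<omega> \<in> space M - N \<Longrightarrow> \<omega> \<in> A \<and> P \<omega>" "N \<in> null_sets M"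
    using AE_E3 by blast
  then have "prob (space M - N) = 1"
    using prob_compl[of N] measure_eq_0_null_sets[of N] by auto
  with N show thesis by (intro that[of "space M - N"]) auto
qed

lemma wiener_process_AE_continuous_on:
  assumes "wiener_process M W"
  shows "AE \<omega> in M. continuous_on {0..t} (\<lambda>r. W r \<omega>)"
proof -
  have "AE \<omega> in M. continuous_on {0..} (\<lambda>r. W r \<omega>)"
    using assms unfolding wiener_process_def by blast
  then show ?thesis by (rule eventually_mono) (auto intro: continuous_on_subset)
qed

lemma AE_covariation_tendsto:
  assumes wiener: "\<forall>i\<in>I. wiener_process M (W i)" and ind: "indep_processes M t W I" and I: "finite I"
    and P: "\<forall>n. is_partition (q n) (L n) t (h n)" and h: "summable h"
    and R: "countable R" "R \<subseteq> {0..t}"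
  shows "AE \<omega> in M. \<forall>i\<in>I. \<forall>k\<in>I. \<forall>r\<in>R.
    (\<lambda>n. weight_upto (q n) (L n) (\<lambda>j. incr (q n) (\<lambda>s. W i s \<omega>) j * incr (q n) (\<lambda>s. W k s \<omega>) j) r)
      \<longlonglongrightarrow> (if i = k then r else 0)"
proof (intro AE_finite_allI[OF I] AE_ball_countable'[OF _ R(1)])
  fix i k r assume ik: "i \<in> I" "k \<in> I" and r: "r \<in> R"
  define \<Delta> where "\<Delta> n = weight_upto (q n) (L n) (incr (q n) (\<lambda>s. s)) r" for n
  define D where "D n = (\<lambda>\<omega>. weight_upto (q n) (L n)
      (\<lambda>j. incr (q n) (\<lambda>s. W i s \<omega>) j * incr (q n) (\<lambda>s. W k s \<omega>) j) r - (if i = k then \<Delta> n else 0))" for n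
  have err: "D n \<in> borel_measurable M" "integrable M (\<lambda>\<omega>. (D n \<omega>)\<^sup>2)"
    "expectation (\<lambda>\<omega>. (D n \<omega>)\<^sup>2) \<le> 2 * h n * t" for n
    unfolding D_def \<Delta>_def by (rule expectation_sq_covariation_error[OF wiener ind P[rule_format] ik])+
  have "AE \<omega> in M. (\<lambda>n. D n \<omega>) \<longlonglongrightarrow> 0"
  proof (rule AE_tendsto_zero_if_summable_sq_integral)
    have "norm (expectation (\<lambda>\<omega>. (D n \<omega>)\<^sup>2)) \<le> 2 * t * h n" for n
      using err(3)[of n] by (simp add: integral_nonneg_AE mult_ac)
    then show "summable (\<lambda>n. expectation (\<lambda>\<omega>. (D n \<omega>)\<^sup>2))"
      by (rule summable_comparison_test'[OF summable_mult[OF h]])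
  qed (use err in auto)
  have "0 \<le> r" "r \<le> t" using R(2) r by auto
  have "(\<lambda>n. \<Delta> n - r) \<longlonglongrightarrow> 0"
  proof (rule Lim_null_comparison)
    show "\<forall>\<^sub>F n in sequentially. norm (\<Delta> n - r) \<le> h n"
      using weight_upto_cell_lengths[OF P[rule_format] \<open>0 \<le> r\<close> \<open>r \<le> t\<close>] unfolding \<Delta>_def
      by (intro always_eventually allI) simp
  qed (rule summable_LIMSEQ_zero[OF h])
  then have \<Delta>_lim: "(\<lambda>n. if i = k then \<Delta> n else 0) \<longlonglongrightarrow> (if i = k then r else 0)"
    by (cases "i = k") (simp_all add: LIM_zero_iff)
  from \<open>AE \<omega> in M. (\<lambda>n. D n \<omega>) \<longlonglongrightarrow> 0\<close>
  show "AE \<omega> in M. (\<lambda>n. weight_upto (q n) (L n)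
      (\<lambda>j. incr (q n) (\<lambda>s. W i s \<omega>) j * incr (q n) (\<lambda>s. W k s \<omega>) j) r) \<longlonglongrightarrow> (if i = k then r else 0)"
  proof (rule eventually_mono)
    fix \<omega> assume "(\<lambda>n. D n \<omega>) \<longlonglongrightarrow> 0"
    from tendsto_add[OF this \<Delta>_lim]
    show "(\<lambda>n. weight_upto (q n) (L n)
        (\<lambda>j. incr (q n) (\<lambda>s. W i s \<omega>) j * incr (q n) (\<lambda>s. W k s \<omega>) j) r) \<longlonglongrightarrow> (if i = k then r else 0)"
      by (simp add: D_def)
  qed
qed

lemma AE_has_quadratic_variation:
  assumes wiener: "\<forall>i\<in>I. wiener_process M (W i)" and ind: "indep_processes M t W I" and I: "finite I"
    and P: "\<forall>n. is_partition (q n) (L n) t (h n)" and h: "summable h"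
  shows "AE \<omega> in M. \<forall>x y. continuous_on {0..t} x \<longrightarrow> bounded_variation_on x 0 t \<longrightarrow>
    (\<forall>i\<in>I. continuous_on {0..t} (y i) \<and> bounded_variation_on (y i) 0 t) \<longrightarrow>
    has_quadratic_variation q L (\<lambda>r. x r + (\<Sum>i\<in>I. y i r * W i r \<omega>)) (\<Sum>i\<in>I. integral {0..t} (\<lambda>r. (y i r)\<^sup>2))"
proof -
  have t: "0 \<le> t" using is_partition_nonneg P by blast
  have "AE \<omega> in M. \<forall>i\<in>I. continuous_on {0..t} (\<lambda>r. W i r \<omega>)"
    using wiener by (intro AE_finite_allI[OF I]) (auto intro: wiener_process_AE_continuous_on)
  moreover note AE_covariation_tendsto[OF wiener ind I P h countable_grid_points grid_points_subset[OF t]]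
  ultimately show ?thesis
  proof eventually_elim
    case (elim \<omega>)
    then show ?case
      using has_quadratic_variation_add_sum_mult[OF P summable_LIMSEQ_zero[OF h] I, of "\<lambda>i r. W i r \<omega>"]
      by blast
  qed
qed

end

theorem lemma4p1:
  fixes M :: "'a measure" and t :: real
    and \<A> :: "(real \<Rightarrow> 'a \<Rightarrow> real) set" and \<Omega>\<A> :: "'a set"
    and N :: nat and W :: "nat \<Rightarrow> real \<Rightarrow> 'a \<Rightarrow> real"
    and s :: "nat \<Rightarrow> nat \<Rightarrow> real" and m :: "nat \<Rightarrow> nat"
  assumes "prob_space M"
    and proc: "\<forall>X\<in>\<A>. \<forall>r\<in>{0..t}. X r \<in> borel_measurable M"
    and \<Omega>\<A>_meas: "\<Omega>\<A> \<in> sets M" and \<Omega>\<A>_full: "measure M \<Omega>\<A> = 1"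
    and \<Omega>\<A>_paths: "\<forall>X\<in>\<A>. \<forall>\<omega>\<in>\<Omega>\<A>.
        continuous_on {0..t} (\<lambda>r. X r \<omega>) \<and> bounded_variation_on (\<lambda>r. X r \<omega>) 0 t"
    and wiener: "\<forall>i\<in>{1..N}. wiener_process M (W i)"
    and indep: "indep_processes M t W {1..N}"
    and part_m: "\<forall>n. 1 \<le> m n"
    and part_0: "\<forall>n. s n 1 = 0" and part_t: "\<forall>n. s n (m n) = t"
    and part_mono: "\<forall>n. \<forall>j\<in>{1..<m n}. s n j \<le> s n (Suc j)"
    and mesh: "(\<lambda>n. Max (insert 0 ((\<lambda>j. s n (Suc j) - s n j) ` {1..<m n}))) \<longlonglongrightarrow> 0"
  shows "\<exists>\<Omega>'. \<Omega>' \<in> sets M \<and> measure M \<Omega>' = 1 \<and> \<Omega>' \<subseteq> \<Omega>\<A> \<and>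
     (\<exists>\<phi>::nat \<Rightarrow> nat. strict_mono \<phi> \<and>
       (\<forall>X Y. X \<in> \<A> \<longrightarrow> (\<forall>i\<in>{1..N}. Y i \<in> \<A>) \<longrightarrow>
         (\<forall>\<omega>\<in>\<Omega>'.
            (let Z = (\<lambda>r. X r \<omega> + (\<Sum>i=1..N. Y i r \<omega> * W i r \<omega>)) in
             (\<lambda>n. \<Sum>j\<in>{1..<m (\<phi> n)}. (Z (s (\<phi> n) (Suc j)) - Z (s (\<phi> n) j))\<^sup>2)
               \<longlonglongrightarrow> (\<Sum>i=1..N. integral {0..t} (\<lambda>r. (Y i r \<omega>)\<^sup>2))))))"
proof -
  interpret prob_space M by fact
  define h where "h n = Max (insert 0 ((\<lambda>j. s n (Suc j) - s n j) ` {1..<m n}))" for n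
  obtain \<phi> where \<phi>: "strict_mono \<phi>" "summable (\<lambda>n. h (\<phi> n))"
    using LIMSEQ_zero_summable_subseq mesh unfolding h_def[abs_def] by blast
  have "\<forall>n. is_partition (s (\<phi> n)) (m (\<phi> n)) t (h (\<phi> n))"
    unfolding h_def using part_m part_0 part_t part_mono by (blast intro: is_partition_Max_mesh)
  from AE_has_quadratic_variation[OF wiener indep finite_atLeastAtMost this \<phi>(2)]
  obtain \<Omega>' where \<Omega>': "\<Omega>' \<in> events" "prob \<Omega>' = 1" "\<Omega>' \<subseteq> \<Omega>\<A>"
    and qv: "\<And>\<omega>. \<omega> \<in> \<Omega>' \<Longrightarrow> \<forall>x y. continuous_on {0..t} x \<longrightarrow> bounded_variation_on x 0 t \<longrightarrow>
      (\<forall>i\<in>{1..N}. continuous_on {0..t} (y i) \<and> bounded_variation_on (y i) 0 t) \<longrightarrow>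
      has_quadratic_variation (\<lambda>n. s (\<phi> n)) (\<lambda>n. m (\<phi> n)) (\<lambda>r. x r + (\<Sum>i=1..N. y i r * W i r \<omega>))
        (\<Sum>i=1..N. integral {0..t} (\<lambda>r. (y i r)\<^sup>2))"
    using AE_obtain_prob_one_subset[OF _ \<Omega>\<A>_full] by blast
  show ?thesis
  proof (intro exI conjI allI impI ballI)
    fix X Y \<omega> assume "X \<in> \<A>" "\<forall>i\<in>{1..N}. Y i \<in> \<A>" and \<omega>: "\<omega> \<in> \<Omega>'"
    then have "has_quadratic_variation (\<lambda>n. s (\<phi> n)) (\<lambda>n. m (\<phi> n))
        (\<lambda>r. X r \<omega> + (\<Sum>i=1..N. Y i r \<omega> * W i r \<omega>)) (\<Sum>i=1..N. integral {0..t} (\<lambda>r. (Y i r \<omega>)\<^sup>2))"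
      using qv[OF \<omega>, rule_format, of "\<lambda>r. X r \<omega>" "\<lambda>i r. Y i r \<omega>"] \<Omega>'(3) \<Omega>\<A>_paths by blast
    then show "let Z = (\<lambda>r. X r \<omega> + (\<Sum>i=1..N. Y i r \<omega> * W i r \<omega>)) in
        (\<lambda>n. \<Sum>j\<in>{1..<m (\<phi> n)}. (Z (s (\<phi> n) (Suc j)) - Z (s (\<phi> n) j))\<^sup>2)
          \<longlonglongrightarrow> (\<Sum>i=1..N. integral {0..t} (\<lambda>r. (Y i r \<omega>)\<^sup>2))"
      by (simp add: has_quadratic_variation_def incr_def)
  qed (use \<Omega>' \<phi>(1) in auto)
qed

end
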